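(* Consider the discrete all-pay auction with $n\ge2$ bidders whose values are drawn independently and uniformly from $X=\{0,1,\dots,x\}$, where $x\ge10$. Then, for every $n\ge2$ and under either tie rule (model with ties or model without ties), the auction has no symmetric equilibrium.
   Context: Model. There are $n$ risk-neutral bidders competing for one indivisible object. Values and bids lie in $X=\{0,1,2,\dots,x\}$. Each bidder privately learns a value drawn independently and uniformly from $X$. Each bidder submits a bid in $X$. A (pure) strategy is a bidding function $\beta:X\to X$. Tie rules: in the model without ties, bidder $i$ wins iff $b_i>b_j$ for all $j\neq i$ (if the highest bid is tied, nobody wins); in the model with ties, if $m$ bidders submit the highest bid, each of them wins with probability $1/m$. In the all-pay auction, a bidder with value $v_i$ bidding $b_i$ gets expected payoff $v_i\Pr(i\text{ wins})-b_i$ (everyone pays their bid). An equilibrium is a profile of bidding functions such that each bidder's bidding function maximises their expected payoff given the others' bidding functions (a pure-strategy Bayes–Nash equilibrium) and such that no bidder uses a weakly dominated bidding function (a bidding function is weakly dominated if some other bidding function yields at least as high expected payoff against every profile of opponents' bidding functions, and strictly higher against some). A symmetric equilibrium is an equilibrium in which all bidders use the same bidding function. *)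

theory Defs
  imports Complex_Main "HOL-Library.FuncSet"
begin

(* Bidders are 0..<n; values and bids lie in {0..x}.  A bidding function is
   beta :: nat => nat, required to map {0..x} into {0..x} (its values outside
   {0..x} are irrelevant).  The Boolean 'ties' selects the tie rule:
   ties = True : the m highest bidders each win with probability 1/m;
   ties = False: a tied highest bid means nobody wins. *)

definition valid_strategy :: "nat \<Rightarrow> (nat \<Rightarrow> nat) \<Rightarrow> bool" where
  "valid_strategy x beta \<longleftrightarrow> (\<forall>v\<le>x. beta v \<le> x)"

definition opponents :: "nat \<Rightarrow> nat \<Rightarrow> nat set" where
  "opponents n i = {0..<n} - {i}"

definition win_share :: "bool \<Rightarrow> nat \<Rightarrow> nat \<Rightarrow> nat \<Rightarrow> (nat \<Rightarrow> nat) \<Rightarrow> real" where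
  "win_share ties n i b bids =
     (if \<forall>j\<in>opponents n i. bids j < b then 1
      else if ties \<and> (\<forall>j\<in>opponents n i. bids j \<le> b)
        then 1 / real (1 + card {j\<in>opponents n i. bids j = b})
      else 0)"

definition win_prob :: "bool \<Rightarrow> nat \<Rightarrow> nat \<Rightarrow> (nat \<Rightarrow> nat \<Rightarrow> nat) \<Rightarrow> nat \<Rightarrow> nat \<Rightarrow> real" where
  "win_prob ties n x s i b =
     (\<Sum>w\<in>PiE (opponents n i) (\<lambda>_. {0..x}). win_share ties n i b (\<lambda>j. s j (w j)))
       / real (x + 1) ^ (n - 1)"

definition interim_payoff :: "bool \<Rightarrow> nat \<Rightarrow> nat \<Rightarrow> (nat \<Rightarrow> nat \<Rightarrow> nat) \<Rightarrow> nat \<Rightarrow> nat \<Rightarrow> nat \<Rightarrow> real" where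
  "interim_payoff ties n x s i v b = real v * win_prob ties n x s i b - real b"

definition exp_payoff :: "bool \<Rightarrow> nat \<Rightarrow> nat \<Rightarrow> (nat \<Rightarrow> nat \<Rightarrow> nat) \<Rightarrow> nat \<Rightarrow> (nat \<Rightarrow> nat) \<Rightarrow> real" where
  "exp_payoff ties n x s i beta =
     (\<Sum>v\<in>{0..x}. interim_payoff ties n x s i v (beta v)) / real (x + 1)"

definition valid_profile :: "nat \<Rightarrow> nat \<Rightarrow> (nat \<Rightarrow> nat \<Rightarrow> nat) \<Rightarrow> bool" where
  "valid_profile n x s \<longleftrightarrow> (\<forall>j<n. valid_strategy x (s j))"

definition weakly_dominated :: "bool \<Rightarrow> nat \<Rightarrow> nat \<Rightarrow> nat \<Rightarrow> (nat \<Rightarrow> nat) \<Rightarrow> bool" where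
  "weakly_dominated ties n x i beta \<longleftrightarrow>
     (\<exists>beta'. valid_strategy x beta' \<and>
        (\<forall>s. valid_profile n x s \<longrightarrow> exp_payoff ties n x s i beta' \<ge> exp_payoff ties n x s i beta) \<and>
        (\<exists>s. valid_profile n x s \<and> exp_payoff ties n x s i beta' > exp_payoff ties n x s i beta))"

definition equilibrium :: "bool \<Rightarrow> nat \<Rightarrow> nat \<Rightarrow> (nat \<Rightarrow> nat \<Rightarrow> nat) \<Rightarrow> bool" where
  "equilibrium ties n x s \<longleftrightarrow>
     valid_profile n x s \<and>
     (\<forall>i<n. \<forall>beta'. valid_strategy x beta' \<longrightarrow> exp_payoff ties n x s i beta' \<le> exp_payoff ties n x s i (s i)) \<and>
     (\<forall>i<n. \<not> weakly_dominated ties n x i (s i))"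

definition symmetric_equilibrium :: "bool \<Rightarrow> nat \<Rightarrow> nat \<Rightarrow> (nat \<Rightarrow> nat) \<Rightarrow> bool" where
  "symmetric_equilibrium ties n x beta \<longleftrightarrow> equilibrium ties n x (\<lambda>_. beta)"

end

theory Submission
  imports Defs
begin

(* In a symmetric equilibrium bids are nondecreasing in the value, and the highest type x bids
   some B < x. Overbidding to B + 1 wins for sure, so x (1 - P(win at B)) <= 1: the top bid
   must win almost surely. But every opponent whose value also bids B causes a tie, which costs
   at least half of the object, and such a tie has probability of order
   (number of opponents) * (number of values bidding B) / (x + 1). For x >= 10 this excludes
   four or more bidders, and with two or three bidders it leaves at most two values bidding B.
   Then the next lower bid must be exactly B - 1, and the incentives of the values just below
   and at the top pool are incompatible; for two bidders because all winning probabilities are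
   multiples of 1 / (2 (x + 1)). *)

definition max_tie_share :: "bool \<Rightarrow> real" where
  "max_tie_share ties = (if ties then 1/2 else 0)"

lemma max_tie_share_le: "max_tie_share ties \<le> 1/2"
  by (simp add: max_tie_share_def)

lemma card_opponents: "i < n \<Longrightarrow> card (opponents n i) = n - 1"
  by (simp add: opponents_def card_Diff_singleton)

lemma finite_opponents [simp]: "finite (opponents n i)"
  by (simp add: opponents_def)

lemma win_share_nonneg: "0 \<le> win_share ties n i b bids"
  unfolding win_share_def by auto

lemma win_share_le_one: "win_share ties n i b bids \<le> 1"
  unfolding win_share_def by auto

lemma win_share_eq_one: "\<forall>j\<in>opponents n i. bids j < b \<Longrightarrow> win_share ties n i b bids = 1"
  unfolding win_share_def by simp

lemma win_share_eq_zero: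
  "j \<in> opponents n i \<Longrightarrow> b < bids j \<Longrightarrow> win_share ties n i b bids = 0"
  unfolding win_share_def by force

lemma win_share_mono:
  assumes "b \<le> b'"
  shows "win_share ties n i b bids \<le> win_share ties n i b' bids"
proof (cases "b < b' \<and> (\<forall>j\<in>opponents n i. bids j \<le> b)")
  case True
  then have "win_share ties n i b' bids = 1"
    by (intro win_share_eq_one) auto
  then show ?thesis
    using win_share_le_one by simp
next
  case False
  show ?thesis
  proof (cases "b = b'")
    case False
    with \<open>\<not> (b < b' \<and> _)\<close> assms obtain j where "j \<in> opponents n i" "b < bids j"
      by (auto simp: not_le)
    then have "win_share ties n i b bids = 0"
      by (rule win_share_eq_zero)
    then show ?thesis
      using win_share_nonneg by simp
  qed simp
qed

lemma win_share_tie: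
  assumes "j \<in> opponents n i" and "bids j = b"
  shows "win_share ties n i b bids \<le> max_tie_share ties"
proof -
  have "0 < card {j\<in>opponents n i. bids j = b}"
    using assms by (subst card_gt_0_iff) auto
  then have "1 / real (1 + card {j\<in>opponents n i. bids j = b}) \<le> 1/2"
    by (simp add: divide_simps)
  moreover have "\<not> (\<forall>j\<in>opponents n i. bids j < b)"
    using assms by force
  ultimately show ?thesis
    unfolding win_share_def max_tie_share_def by auto
qed

lemma win_share_ge_inverse:
  assumes ties and "i < n" and "\<forall>j\<in>opponents n i. bids j \<le> b"
  shows "1 / real n \<le> win_share ties n i b bids"
proof -
  have "card {j\<in>opponents n i. bids j = b} \<le> n - 1"
    using card_mono[of "opponents n i"] card_opponents[OF \<open>i < n\<close>] by force
  then have "1 / real n \<le> 1 / real (1 + card {j\<in>opponents n i. bids j = b})"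
    using \<open>i < n\<close> by (intro divide_left_mono) auto
  then show ?thesis
    using assms unfolding win_share_def by auto
qed

lemma win_share_half_integral:
  assumes "card (opponents n i) \<le> 1"
  shows "2 * win_share ties n i b bids \<in> \<int>"
proof -
  define c where "c = card {j\<in>opponents n i. bids j = b}"
  have "c \<le> 1"
    using assms card_mono[OF finite_opponents, of "{j\<in>opponents n i. bids j = b}" n i]
    unfolding c_def by auto
  then have "2 * (1 / real (1 + c)) \<in> \<int>"
    by (cases c) auto
  then show ?thesis
    unfolding win_share_def c_def[symmetric] by simp
qed

lemma card_PiE_avoiding:
  assumes "finite I" and "J \<subseteq> I" and "finite A" and "S \<subseteq> A"
  shows "card {w\<in>PiE I (\<lambda>_. A). \<forall>j\<in>J. w j \<notin> S}
           = (card A - card S) ^ card J * card A ^ (card I - card J)"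
proof -
  have "{w\<in>PiE I (\<lambda>_. A). \<forall>j\<in>J. w j \<notin> S} = PiE I (\<lambda>j. if j \<in> J then A - S else A)"
    using assms(2) by (auto simp: PiE_def Pi_def extensional_def split: if_splits)
  moreover have "card (PiE I (\<lambda>j. if j \<in> J then A - S else A))
      = (\<Prod>j\<in>J. card (A - S)) * (\<Prod>j\<in>I - J. card A)"
    using assms prod.subset_diff[of J I "\<lambda>j. card (if j \<in> J then A - S else A)"]
    by (simp add: card_PiE mult.commute)
  ultimately show ?thesis
    using assms by (simp add: card_Diff_subset finite_subset)
qed

(* Writing x = 10 + y turns each polynomial inequality needed below into one whose
   coefficients in y are all nonnegative. *)
lemma shift_by_ten:
  assumes "10 \<le> x"
  obtains y :: real where "real x = 10 + y" and "0 \<le> y"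
  using assms by (intro that[of "real x - 10"]) auto

locale symmetric_all_pay_equilibrium =
  fixes ties :: bool and n x :: nat and \<beta> :: "nat \<Rightarrow> nat"
  assumes equilibrium: "symmetric_equilibrium ties n x \<beta>"
    and two_le_bidders: "2 \<le> n"
begin

abbreviation win :: "nat \<Rightarrow> real" where
  "win b \<equiv> win_prob ties n x (\<lambda>_. \<beta>) 0 b"

abbreviation profiles :: "(nat \<Rightarrow> nat) set" where
  "profiles \<equiv> PiE (opponents n 0) (\<lambda>_. {0..x})"

lemma bid_le: "v \<le> x \<Longrightarrow> \<beta> v \<le> x"
proof -
  have "\<forall>j<n. valid_strategy x \<beta>"
    using equilibrium unfolding symmetric_equilibrium_def equilibrium_def valid_profile_def by simp
  then have "valid_strategy x \<beta>"
    using two_le_bidders by force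
  then show "v \<le> x \<Longrightarrow> \<beta> v \<le> x"
    unfolding valid_strategy_def by blast
qed

lemma best_response:
  assumes "v \<le> x" and "b \<le> x"
  shows "real v * win b - real b \<le> real v * win (\<beta> v) - real (\<beta> v)"
proof -
  let ?u = "interim_payoff ties n x (\<lambda>_. \<beta>) 0"
  have "valid_strategy x (\<beta>(v := b))"
    using bid_le assms(2) unfolding valid_strategy_def by auto
  then have "exp_payoff ties n x (\<lambda>_. \<beta>) 0 (\<beta>(v := b)) \<le> exp_payoff ties n x (\<lambda>_. \<beta>) 0 \<beta>"
    using equilibrium two_le_bidders unfolding symmetric_equilibrium_def equilibrium_def by auto
  then have "(\<Sum>u\<in>{0..x}. ?u u ((\<beta>(v := b)) u)) \<le> (\<Sum>u\<in>{0..x}. ?u u (\<beta> u))"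
    unfolding exp_payoff_def by (simp add: divide_le_cancel)
  moreover have "(\<Sum>u\<in>{0..x}. ?u u ((\<beta>(v := b)) u)) = ?u v b + (\<Sum>u\<in>{0..x} - {v}. ?u u (\<beta> u))"
    using assms(1) by (subst sum.remove[of _ v]) (auto intro!: sum.cong)
  moreover have "(\<Sum>u\<in>{0..x}. ?u u (\<beta> u)) = ?u v (\<beta> v) + (\<Sum>u\<in>{0..x} - {v}. ?u u (\<beta> u))"
    using assms(1) by (subst sum.remove[of _ v]) auto
  ultimately have "?u v b \<le> ?u v (\<beta> v)"
    by linarith
  then show ?thesis
    unfolding interim_payoff_def .
qed

lemma opponents_eq: "opponents n 0 = {1..<n}"
  unfolding opponents_def by auto

lemma card_opponents_zero [simp]: "card (opponents n 0) = n - 1"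
  using two_le_bidders by (simp add: card_opponents)

lemma finite_profiles: "finite profiles"
  by (simp add: finite_PiE)

lemma card_profiles_avoiding:
  assumes "J \<subseteq> opponents n 0" and "S \<subseteq> {0..x}"
  shows "card {w\<in>profiles. \<forall>j\<in>J. w j \<notin> S} = (x + 1 - card S) ^ card J * (x + 1) ^ (n - 1 - card J)"
  using card_PiE_avoiding[OF finite_opponents assms(1) _ assms(2)] by simp

lemma win_eq:
  "win b = (\<Sum>w\<in>profiles. win_share ties n 0 b (\<lambda>j. \<beta> (w j))) / (real x + 1) ^ (n - 1)"
  unfolding win_prob_def by (simp add: add.commute)

lemma win_nonneg: "0 \<le> win b"
  unfolding win_eq by (intro divide_nonneg_nonneg sum_nonneg win_share_nonneg) auto

lemma win_mono: "b \<le> b' \<Longrightarrow> win b \<le> win b'"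
  unfolding win_eq by (intro divide_right_mono sum_mono win_share_mono) auto

lemma win_eq_one:
  assumes "\<forall>v\<le>x. \<beta> v < b"
  shows "win b = 1"
proof -
  have "(\<Sum>w\<in>profiles. win_share ties n 0 b (\<lambda>j. \<beta> (w j))) = real (card profiles)"
    using assms by (simp add: win_share_eq_one PiE_iff)
  then show ?thesis
    unfolding win_eq by (simp add: card_PiE add.commute)
qed

lemma win_ge_all_below:
  "(real (card {v\<in>{0..x}. \<beta> v < b}) / (real x + 1)) ^ (n - 1) \<le> win b"
proof -
  define L where "L = {v\<in>{0..x}. \<beta> v < b}"
  have "real (card L) ^ (n - 1) = (\<Sum>w\<in>PiE (opponents n 0) (\<lambda>_. L). win_share ties n 0 b (\<lambda>j. \<beta> (w j)))"
    by (simp add: L_def win_share_eq_one PiE_iff card_PiE)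
  also have "\<dots> \<le> (\<Sum>w\<in>profiles. win_share ties n 0 b (\<lambda>j. \<beta> (w j)))"
    by (intro sum_mono2 finite_profiles win_share_nonneg) (auto simp: L_def PiE_iff)
  finally show ?thesis
    unfolding win_eq L_def[symmetric] by (simp add: power_divide divide_right_mono)
qed

(* q is the probability that no opponent in J has a value in S; otherwise bidder 0 ties at b. *)
lemma win_le_tie_bound:
  assumes "J \<subseteq> opponents n 0" and "S \<subseteq> {0..x}" and "\<forall>v\<in>S. \<beta> v = b"
  defines "q \<equiv> ((real x + 1 - real (card S)) / (real x + 1)) ^ card J"
  shows "win b \<le> 1 - (1 - max_tie_share ties) * (1 - q)"
proof -
  define Q where "Q = {w\<in>profiles. \<forall>j\<in>J. w j \<notin> S}"
  define m where "m = max_tie_share ties"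
  define N where "N = real x + 1"
  have share_le: "win_share ties n 0 b (\<lambda>j. \<beta> (w j)) \<le> (if w \<in> Q then 1 else m)"
    if w: "w \<in> profiles" for w
  proof (cases "w \<in> Q")
    case False
    then obtain j where "j \<in> J" and "w j \<in> S"
      using w unfolding Q_def by blast
    then show ?thesis
      using False assms(1,3) win_share_tie[of j n 0 "\<lambda>j. \<beta> (w j)" b] unfolding m_def by auto
  qed (simp add: win_share_le_one)
  have "Q \<subseteq> profiles"
    unfolding Q_def by auto
  have "card S \<le> x + 1"
    using card_mono[OF _ assms(2)] by simp
  then have card_Q: "real (card Q) = (N - real (card S)) ^ card J * N ^ (n - 1 - card J)"
    unfolding Q_def card_profiles_avoiding[OF assms(1,2)] N_def by (simp add: of_nat_diff add.commute)
  have N_pow_pos: "0 < N ^ (n - 1)"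
    unfolding N_def by simp
  have card_profiles: "real (card profiles) = N ^ (n - 1)"
    unfolding N_def by (simp add: card_PiE add.commute)
  have "card J \<le> n - 1"
    using card_mono[OF finite_opponents assms(1)] by simp
  then have "N ^ (n - 1) = N ^ card J * N ^ (n - 1 - card J)"
    by (metis le_add_diff_inverse power_add)
  then have q: "q = real (card Q) / N ^ (n - 1)"
    unfolding card_Q q_def N_def by (simp add: power_divide)
  have "(\<Sum>w\<in>profiles. win_share ties n 0 b (\<lambda>j. \<beta> (w j))) \<le> (\<Sum>w\<in>profiles. if w \<in> Q then 1 else m)"
    by (intro sum_mono share_le)
  also have "\<dots> = m * real (card (profiles - Q)) + real (card Q)"
    using sum.subset_diff[OF \<open>Q \<subseteq> profiles\<close> finite_profiles, of "\<lambda>w. if w \<in> Q then 1 else m"]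
    by simp
  also have "\<dots> = N ^ (n - 1) * (1 - (1 - m) * (1 - q))"
    using \<open>Q \<subseteq> profiles\<close> finite_profiles N_pow_pos[THEN less_imp_neq, THEN not_sym]
    by (simp add: q card_Diff_subset finite_subset card_mono of_nat_diff card_profiles field_simps)
  finally show ?thesis
    unfolding win_eq m_def[symmetric] N_def[symmetric] using N_pow_pos
    by (simp add: pos_divide_le_eq mult.commute)
qed

lemma bid_mono:
  assumes "v \<le> v'" and "v' \<le> x"
  shows "\<beta> v \<le> \<beta> v'"
proof (rule ccontr)
  assume "\<not> \<beta> v \<le> \<beta> v'"
  then have less: "\<beta> v' < \<beta> v" by simp
  have "real v * win (\<beta> v') - real (\<beta> v') \<le> real v * win (\<beta> v) - real (\<beta> v)"
    and "real v' * win (\<beta> v) - real (\<beta> v) \<le> real v' * win (\<beta> v') - real (\<beta> v')"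
    using best_response assms bid_le by auto
  then have "(real v' - real v) * (win (\<beta> v) - win (\<beta> v')) \<le> 0"
    by (simp add: algebra_simps)
  moreover have "v < v'"
    using assms less by (metis le_neq_implies_less less_irrefl)
  moreover have "win (\<beta> v') \<le> win (\<beta> v)"
    using win_mono less by simp
  ultimately have "win (\<beta> v) = win (\<beta> v')"
    by (simp add: mult_le_0_iff)
  with \<open>real v * win (\<beta> v') - real (\<beta> v') \<le> _\<close> less show False
    by simp
qed

lemma top_bid_less:
  assumes "0 < x"
  shows "\<beta> x < x"
proof (rule ccontr)
  assume "\<not> \<beta> x < x"
  then have top: "\<beta> x = x"
    using bid_le[of x] by simp
  have "real x * win 0 \<le> real x * win (\<beta> x) - real x"
    using best_response[of x 0] top by simp
  moreover have "0 \<le> real x * win 0"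
    using win_nonneg[of 0] by simp
  ultimately have "real x * 1 \<le> real x * win (\<beta> x)"
    by simp
  then have "1 \<le> win (\<beta> x)"
    using assms by simp
  moreover have "win (\<beta> x) \<le> 1 - (1 - max_tie_share ties) * (1 - real x / (real x + 1))"
    using win_le_tie_bound[of "{1}" "{x}" "\<beta> x"] two_le_bidders by (simp add: opponents_eq)
  moreover have "0 < (1 - max_tie_share ties) * (1 - real x / (real x + 1))"
    using max_tie_share_le[of ties] by (intro mult_pos_pos) auto
  ultimately show False
    by linarith
qed

lemma overbidding_top_bid:
  assumes "0 < x"
  shows "real x * (1 - win (\<beta> x)) \<le> 1"
proof -
  have "win (Suc (\<beta> x)) = 1"
    using bid_mono by (intro win_eq_one) (auto simp: le_imp_less_Suc)
  then show ?thesis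
    using best_response[of x "Suc (\<beta> x)"] top_bid_less[OF assms] by (simp add: algebra_simps)
qed

lemma top_pool_bound:
  assumes "J \<subseteq> opponents n 0" and "S \<subseteq> {0..x}" and "\<forall>v\<in>S. \<beta> v = \<beta> x" and "0 < x"
  shows "real x * (1 - max_tie_share ties) * ((real x + 1) ^ card J - (real x + 1 - real (card S)) ^ card J)
           \<le> (real x + 1) ^ card J"
proof -
  define N where "N = real x + 1"
  define q where "q = ((N - real (card S)) / N) ^ card J"
  have N_pow_pos: "0 < N ^ card J"
    unfolding N_def by simp
  have "win (\<beta> x) \<le> 1 - (1 - max_tie_share ties) * (1 - q)"
    using win_le_tie_bound[OF assms(1-3)] unfolding q_def N_def .
  then have "real x * ((1 - max_tie_share ties) * (1 - q)) \<le> real x * (1 - win (\<beta> x))"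
    by (intro mult_left_mono) auto
  also have "\<dots> \<le> 1"
    using overbidding_top_bid[OF assms(4)] .
  also have "1 - q = (N ^ card J - (N - real (card S)) ^ card J) / N ^ card J"
    using N_pow_pos[THEN less_imp_neq, THEN not_sym] unfolding q_def power_divide
    by (simp add: diff_divide_distrib)
  finally show ?thesis
    using N_pow_pos unfolding N_def[symmetric] by (simp add: pos_divide_le_eq mult.assoc)
qed

lemma top_bid_eq_Suc:
  assumes "k < x" and top: "\<beta> (Suc k) = \<beta> x" and below: "\<beta> k < \<beta> x"
    and small: "real x * max_tie_share ties * (1 - ((real k + 1) / (real x + 1)) ^ (n - 1)) < 1"
  shows "\<beta> x = Suc (\<beta> k)"
proof (rule ccontr)
  define q where "q = ((real k + 1) / (real x + 1)) ^ (n - 1)"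
  assume "\<beta> x \<noteq> Suc (\<beta> k)"
  then have gap: "Suc (\<beta> k) < \<beta> x"
    using below by simp
  have "{0..k} \<subseteq> {v\<in>{0..x}. \<beta> v < Suc (\<beta> k)}"
    using bid_mono \<open>k < x\<close> by (auto simp: le_imp_less_Suc)
  then have "k + 1 \<le> card {v\<in>{0..x}. \<beta> v < Suc (\<beta> k)}"
    using card_mono[of "{v\<in>{0..x}. \<beta> v < Suc (\<beta> k)}" "{0..k}"] by simp
  then have win_above: "q \<le> win (Suc (\<beta> k))"
    unfolding q_def by (intro order.trans[OF _ win_ge_all_below] power_mono divide_right_mono) auto
  have "win (\<beta> x) \<le> 1 - (1 - max_tie_share ties) *
      (1 - ((real x + 1 - real (card {k<..x})) / (real x + 1)) ^ card (opponents n 0))"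
  proof (rule win_le_tie_bound)
    show "\<forall>v\<in>{k<..x}. \<beta> v = \<beta> x"
    proof
      fix v
      assume "v \<in> {k<..x}"
      then have "\<beta> (Suc k) \<le> \<beta> v" and "\<beta> v \<le> \<beta> x"
        using bid_mono by auto
      then show "\<beta> v = \<beta> x"
        using top by simp
    qed
  qed auto
  moreover have "real x + 1 - real (card {k<..x}) = real k + 1"
    using \<open>k < x\<close> by (simp add: of_nat_diff)
  ultimately have "win (\<beta> x) \<le> 1 - (1 - max_tie_share ties) * (1 - q)"
    unfolding q_def by (simp add: add.commute)
  with win_above have "win (\<beta> x) - win (Suc (\<beta> k)) \<le> max_tie_share ties * (1 - q)"
    by (simp add: algebra_simps)
  then have "real x * (win (\<beta> x) - win (Suc (\<beta> k))) \<le> real x * max_tie_share ties * (1 - q)"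
    unfolding mult.assoc by (rule mult_left_mono) simp
  moreover have "real (\<beta> x) - real (Suc (\<beta> k)) \<le> real x * (win (\<beta> x) - win (Suc (\<beta> k)))"
    using best_response[of x "Suc (\<beta> k)"] gap bid_le[of x] by (simp add: algebra_simps)
  ultimately show False
    using small gap unfolding q_def by linarith
qed

lemma top_pool_bound_half:
  assumes "J \<subseteq> opponents n 0" and "S \<subseteq> {0..x}" and "\<forall>v\<in>S. \<beta> v = \<beta> x" and "0 < x"
  shows "real x * ((real x + 1) ^ card J - (real x + 1 - real (card S)) ^ card J) \<le> 2 * (real x + 1) ^ card J"
proof -
  define A where "A = (real x + 1) ^ card J - (real x + 1 - real (card S)) ^ card J"
  have "card S \<le> x + 1"
    using card_mono[OF _ assms(2)] by simp
  then have "0 \<le> real x * A"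
    unfolding A_def by (intro mult_nonneg_nonneg) (auto intro!: power_mono)
  then have "real x * A * 1 \<le> real x * A * (2 * (1 - max_tie_share ties))"
    using max_tie_share_le[of ties] by (intro mult_left_mono) auto
  also have "\<dots> \<le> 2 * (real x + 1) ^ card J"
    using top_pool_bound[OF assms] unfolding A_def by (simp add: algebra_simps)
  finally show ?thesis
    unfolding A_def by simp
qed

lemma many_bidders_impossible:
  assumes "4 \<le> n" and "10 \<le> x"
  shows False
proof -
  define N where "N = real x + 1"
  have "real x * (N ^ 3 - real x ^ 3) \<le> 2 * N ^ 3"
    using top_pool_bound_half[of "{1, 2, 3}" "{x}"] assms unfolding N_def
    by (simp add: opponents_eq power3_eq_cube mult.assoc)
  moreover have "2 * N ^ 3 < real x * (N ^ 3 - real x ^ 3)"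
  proof -
    obtain y where "real x = 10 + y" and "0 \<le> y"
      using shift_by_ten[OF assms(2)] by blast
    then show ?thesis
      unfolding N_def
      by (simp add: power3_eq_cube algebra_simps, intro add_nonneg_pos mult_nonneg_nonneg) auto
  qed
  ultimately show False
    by linarith
qed

definition avoiding :: "nat set \<Rightarrow> (nat \<Rightarrow> nat) set" where
  "avoiding S = {w\<in>profiles. \<forall>j\<in>opponents n 0. w j \<notin> S}"

(* With three bidders and x = Suc u, a lower bound for what bidder 0 gains by raising the bid
   from \<beta> u to \<beta> x: an opponent valuing x turns a loss into a tie, an opponent valuing u
   (and none valuing x) turns a tie into a win. *)
definition gap_weight :: "nat \<Rightarrow> (nat \<Rightarrow> nat) \<Rightarrow> real" where
  "gap_weight u w =
     (if w \<notin> avoiding {x} then 1/3 else if w \<notin> avoiding {u, x} then 1/2 else 0)"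

lemma three_bidders_share_gap:
  assumes "n = 3" and ties and x: "x = Suc u" and isolated: "\<beta> u < \<beta> x" and w: "w \<in> profiles"
  shows "gap_weight u w \<le> win_share ties n 0 (\<beta> x) (\<lambda>j. \<beta> (w j)) - win_share ties n 0 (\<beta> u) (\<lambda>j. \<beta> (w j))"
proof -
  let ?share = "\<lambda>b. win_share ties n 0 b (\<lambda>j. \<beta> (w j))"
  have below_top: "?share (\<beta> x) = 1" if "w \<in> avoiding {x}"
  proof (rule win_share_eq_one, rule ballI)
    fix j
    assume "j \<in> opponents n 0"
    then have "w j \<le> x" and "w j \<noteq> x"
      using that w unfolding avoiding_def by (auto simp: PiE_iff)
    then have "w j \<le> u"
      unfolding x by arith
    then show "\<beta> (w j) < \<beta> x"
      using bid_mono[of "w j" u] isolated unfolding x by simp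
  qed
  consider (top) "w \<notin> avoiding {x}" | (next_to_top) "w \<in> avoiding {x}" "w \<notin> avoiding {u, x}"
    | (low) "w \<in> avoiding {u, x}"
    unfolding avoiding_def by blast
  then show ?thesis
  proof cases
    case top
    then obtain j where "j \<in> opponents n 0" and "w j = x"
      using w unfolding avoiding_def by blast
    then have "?share (\<beta> u) = 0"
      using isolated by (intro win_share_eq_zero[of j]) auto
    moreover have "\<forall>j\<in>opponents n 0. \<beta> (w j) \<le> \<beta> x"
      using w bid_mono by (auto simp: PiE_iff)
    then have "1 / real n \<le> ?share (\<beta> x)"
      using \<open>ties\<close> assms(1) by (intro win_share_ge_inverse) auto
    ultimately show ?thesis
      using top assms(1) unfolding gap_weight_def by simp
  next
    case next_to_top
    then obtain j where "j \<in> opponents n 0" and "w j = u"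
      using w unfolding avoiding_def by blast
    then have "?share (\<beta> u) \<le> 1/2"
      using win_share_tie[of j n 0 "\<lambda>j. \<beta> (w j)" "\<beta> u" ties] \<open>ties\<close> unfolding max_tie_share_def
      by simp
    then show ?thesis
      using next_to_top below_top unfolding gap_weight_def by simp
  next
    case low
    then have "w \<in> avoiding {x}"
      unfolding avoiding_def by blast
    then show ?thesis
      using low below_top win_share_le_one[of ties n 0 "\<beta> u"] unfolding gap_weight_def by simp
  qed
qed

lemma three_bidders_sum_gap_weight:
  assumes "n = 3" and x: "x = Suc u"
  shows "(\<Sum>w\<in>profiles. gap_weight u w) = (10 * real x - 1) / 6"
proof -
  have sub: "avoiding {u, x} \<subseteq> avoiding {x}" "avoiding {x} \<subseteq> profiles"
    unfolding avoiding_def by auto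
  have fin: "finite (avoiding {x})"
    using finite_subset[OF sub(2) finite_profiles] .
  have card_avoiding: "real (card (avoiding S)) = (real x + 1 - real (card S)) ^ 2"
    if "S \<subseteq> {0..x}" for S
  proof -
    have "card S \<le> x + 1"
      using card_mono[OF _ that] by simp
    then show ?thesis
      using card_profiles_avoiding[OF order.refl that] assms(1) unfolding avoiding_def
      by (simp add: card_opponents of_nat_diff add.commute)
  qed
  have card_P: "real (card profiles) = (real x + 1) ^ 2"
    using assms(1) by (simp add: card_PiE card_opponents)
  have card_1: "real (card (avoiding {x})) = real x ^ 2"
    using card_avoiding[of "{x}"] by simp
  have card_2: "real (card (avoiding {u, x})) = (real x - 1) ^ 2"
    using card_avoiding[of "{u, x}"] x by simp
  have "real (card (profiles - avoiding {x})) = (real x + 1) ^ 2 - real x ^ 2"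
    using card_Diff_subset[OF fin sub(2)] card_mono[OF finite_profiles sub(2)]
    by (simp add: of_nat_diff card_P card_1)
  moreover have "real (card (avoiding {x} - avoiding {u, x})) = real x ^ 2 - (real x - 1) ^ 2"
    using card_Diff_subset[OF finite_subset[OF sub(1) fin] sub(1)] card_mono[OF fin sub(1)]
    by (simp add: of_nat_diff card_1 card_2)
  moreover have "(\<Sum>w\<in>profiles. gap_weight u w) = (\<Sum>w\<in>profiles - avoiding {x}. gap_weight u w)
      + (\<Sum>w\<in>avoiding {x} - avoiding {u, x}. gap_weight u w) + (\<Sum>w\<in>avoiding {u, x}. gap_weight u w)"
    using sum.subset_diff[OF sub(2) finite_profiles, of "gap_weight u"]
      sum.subset_diff[OF sub(1) fin, of "gap_weight u"] by simp
  moreover have "(\<Sum>w\<in>avoiding {u, x}. gap_weight u w) = 0"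
    using sub(1) unfolding gap_weight_def by (intro sum.neutral) auto
  ultimately have "(\<Sum>w\<in>profiles. gap_weight u w)
      = ((real x + 1) ^ 2 - real x ^ 2) / 3 + (real x ^ 2 - (real x - 1) ^ 2) / 2"
    unfolding gap_weight_def by simp
  also have "\<dots> = (10 * real x - 1) / 6"
    by (simp add: power2_eq_square field_simps)
  finally show ?thesis .
qed

lemma three_bidders_win_gap:
  assumes "n = 3" and ties and isolated: "\<beta> (x - 1) < \<beta> x"
  shows "(10 * real x - 1) / 6 \<le> (real x + 1) ^ 2 * (win (\<beta> x) - win (\<beta> (x - 1)))"
proof -
  obtain u where x: "x = Suc u"
    using isolated by (cases x) auto
  let ?share = "\<lambda>b w. win_share ties n 0 b (\<lambda>j. \<beta> (w j))"
  have "(10 * real x - 1) / 6 \<le> (\<Sum>w\<in>profiles. ?share (\<beta> x) w - ?share (\<beta> u) w)"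
    unfolding three_bidders_sum_gap_weight[OF assms(1) x, symmetric]
    using three_bidders_share_gap[OF assms(1,2) x] isolated x by (intro sum_mono) simp
  also have "\<dots> = (real x + 1) ^ 2 * (win (\<beta> x) - win (\<beta> u))"
    using win_eq[of "\<beta> x"] win_eq[of "\<beta> u"] assms(1) by (simp add: sum_subtractf field_simps)
  finally show ?thesis
    unfolding x by simp
qed

lemma three_bidders_top_bid_eq_Suc:
  assumes "n = 3" and ties and "10 \<le> x" and isolated: "\<beta> (x - 1) < \<beta> x"
  shows "\<beta> x = Suc (\<beta> (x - 1))"
proof (rule top_bid_eq_Suc[OF _ _ isolated])
  define N where "N = real x + 1"
  have "0 < N"
    unfolding N_def by simp
  have "real x * (1 - (real x / N) ^ 2) = real x * (N ^ 2 - real x ^ 2) / N ^ 2"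
    using \<open>0 < N\<close> by (simp add: field_simps)
  also have "N ^ 2 - real x ^ 2 = 2 * real x + 1"
    unfolding N_def by (simp add: power2_eq_square algebra_simps)
  also have "real x * (2 * real x + 1) < 2 * N ^ 2"
    unfolding N_def by (simp add: power2_eq_square algebra_simps)
  then have "real x * (2 * real x + 1) / N ^ 2 < 2"
    using \<open>0 < N\<close> by (simp add: pos_divide_less_eq)
  finally have "real x * (1 - (real x / N) ^ 2) < 2" .
  moreover have "real (x - 1) + 1 = real x"
    using assms(3) by (simp add: of_nat_diff)
  ultimately show "real x * max_tie_share ties * (1 - ((real (x - 1) + 1) / (real x + 1)) ^ (n - 1)) < 1"
    using \<open>ties\<close> assms(1) unfolding N_def by (simp add: max_tie_share_def)
qed (use assms(3) in auto)

lemma three_bidders_isolated_top_impossible: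
  assumes "n = 3" and ties and "10 \<le> x" and isolated: "\<beta> (x - 1) < \<beta> x"
  shows False
proof -
  define N where "N = real x + 1"
  have x1: "real (x - 1) = real x - 1"
    using assms(3) by (simp add: of_nat_diff)
  have "\<beta> x = Suc (\<beta> (x - 1))"
    using three_bidders_top_bid_eq_Suc[OF assms] .
  then have incentive: "(real x - 1) * (win (\<beta> x) - win (\<beta> (x - 1))) \<le> 1"
    using best_response[of "x - 1" "\<beta> x"] bid_le[of x] x1 by (simp add: algebra_simps)
  have "(10 * real x - 1) / 6 \<le> N ^ 2 * (win (\<beta> x) - win (\<beta> (x - 1)))"
    using three_bidders_win_gap[OF assms(1,2) isolated] unfolding N_def .
  then have "(real x - 1) * ((10 * real x - 1) / 6) \<le> (real x - 1) * (N ^ 2 * (win (\<beta> x) - win (\<beta> (x - 1))))"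
    using assms(3) by (intro mult_left_mono) auto
  also have "\<dots> = N ^ 2 * ((real x - 1) * (win (\<beta> x) - win (\<beta> (x - 1))))"
    by (simp only: mult_ac)
  also have "\<dots> \<le> N ^ 2"
    using incentive by (simp add: mult_left_le)
  finally have "(real x - 1) * (10 * real x - 1) \<le> 6 * N ^ 2"
    by simp
  moreover have "6 * N ^ 2 < (real x - 1) * (10 * real x - 1)"
  proof -
    obtain y where "real x = 10 + y" and "0 \<le> y"
      using shift_by_ten[OF assms(3)] by blast
    then show ?thesis
      unfolding N_def
      by (simp add: power2_eq_square algebra_simps, intro add_nonneg_pos mult_nonneg_nonneg) auto
  qed
  ultimately show False
    by linarith
qed

lemma three_bidders_impossible:
  assumes "n = 3" and "10 \<le> x"
  shows False
proof -
  define N where "N = real x + 1"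
  have pair: "{1, 2} \<subseteq> opponents n 0"
    using assms(1) by (auto simp: opponents_def)
  consider "\<not> ties" | "ties" "\<beta> (x - 1) = \<beta> x" | "ties" "\<beta> (x - 1) < \<beta> x"
    using bid_mono[of "x - 1" x] by fastforce
  then show False
  proof cases
    case 1
    then have "real x * (N ^ 2 - real x ^ 2) \<le> N ^ 2"
      using top_pool_bound[OF pair, of "{x}"] assms(2)
      unfolding N_def by (simp add: max_tie_share_def power2_eq_square)
    moreover have "N ^ 2 < real x * (N ^ 2 - real x ^ 2)"
    proof -
      obtain y where "real x = 10 + y" and "0 \<le> y"
        using shift_by_ten[OF assms(2)] by blast
      then show ?thesis
        unfolding N_def
        by (simp add: power2_eq_square algebra_simps, intro add_nonneg_pos mult_nonneg_nonneg) auto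
    qed
    ultimately show False
      by linarith
  next
    case 2
    then have "real x * (N ^ 2 - (N - 2) ^ 2) \<le> 2 * N ^ 2"
      using top_pool_bound_half[OF pair, of "{x - 1, x}"] assms(2)
      unfolding N_def by (simp add: power2_eq_square)
    moreover have "2 * N ^ 2 < real x * (N ^ 2 - (N - 2) ^ 2)"
    proof -
      obtain y where "real x = 10 + y" and "0 \<le> y"
        using shift_by_ten[OF assms(2)] by blast
      then show ?thesis
        unfolding N_def
        by (simp add: power2_eq_square algebra_simps, intro add_nonneg_pos mult_nonneg_nonneg) auto
    qed
    ultimately show False
      by linarith
  next
    case 3
    then show False
      using three_bidders_isolated_top_impossible assms by blast
  qed
qed

lemma two_bidders_win_half_integral:
  assumes "n = 2"
  shows "2 * (real x + 1) * win b \<in> \<int>"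
proof -
  have "(0::real) < real x + 1"
    by simp
  then have "real x + 1 \<noteq> 0"
    by (rule less_imp_neq[THEN not_sym])
  then have "2 * (real x + 1) * win b = 2 * (\<Sum>w\<in>profiles. win_share ties n 0 b (\<lambda>j. \<beta> (w j)))"
    unfolding win_eq using assms by (simp add: field_simps)
  also have "\<dots> = (\<Sum>w\<in>profiles. 2 * win_share ties n 0 b (\<lambda>j. \<beta> (w j)))"
    by (simp add: sum_distrib_left)
  also have "\<dots> \<in> \<int>"
    using assms by (intro Ints_sum win_share_half_integral) (simp add: card_opponents)
  finally show ?thesis .
qed

lemma two_bidders_top_bid_eq_Suc:
  assumes "n = 2" and "k < x" and "x \<le> k + 2" and top: "\<beta> (Suc k) = \<beta> x" and below: "\<beta> k < \<beta> x"
  shows "\<beta> x = Suc (\<beta> k)"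
proof (rule top_bid_eq_Suc[OF \<open>k < x\<close> top below])
  define N where "N = real x + 1"
  have "0 < N"
    unfolding N_def by simp
  have "max_tie_share ties * (real x - real k) \<le> 1/2 * 2"
    using max_tie_share_le[of ties] assms(2,3) by (intro mult_mono) (auto simp: max_tie_share_def)
  then have "real x * (max_tie_share ties * (real x - real k)) \<le> real x"
    by (simp add: mult_left_le)
  also have "\<dots> < N"
    unfolding N_def by simp
  finally have "real x * max_tie_share ties * ((real x - real k) / N) < 1"
    using \<open>0 < N\<close> by (simp add: mult.assoc)
  moreover have "1 - (real k + 1) / N = (real x - real k) / N"
    using \<open>0 < N\<close> unfolding N_def by (simp add: field_simps)
  ultimately show "real x * max_tie_share ties * (1 - ((real k + 1) / (real x + 1)) ^ (n - 1)) < 1"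
    using assms(1) unfolding N_def by simp
qed

lemma two_bidders_short_top_pool_impossible:
  assumes "n = 2" and "10 \<le> x" and "k < x" and "x \<le> k + 2"
    and top: "\<beta> (Suc k) = \<beta> x" and below: "\<beta> k < \<beta> x"
  shows False
proof -
  define N where "N = real x + 1"
  define \<Delta> where "\<Delta> = win (\<beta> x) - win (\<beta> k)"
  have "0 < N"
    unfolding N_def by simp
  have step: "\<beta> x = Suc (\<beta> k)"
    using two_bidders_top_bid_eq_Suc[OF assms(1,3,4) top below] .
  have climb: "1 \<le> (real k + 1) * \<Delta>"
    using best_response[of "Suc k" "\<beta> k"] top step bid_le[of k] assms(3)
    by (simp add: \<Delta>_def algebra_simps)
  have stay: "real k * \<Delta> \<le> 1"
    using best_response[of k "\<beta> x"] step bid_le[of x] assms(3)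
    by (simp add: \<Delta>_def algebra_simps)
  have "2 * N * \<Delta> \<in> \<int>"
    using two_bidders_win_half_integral[OF assms(1)] unfolding \<Delta>_def N_def
    by (simp add: right_diff_distrib)
  then obtain d :: int where d: "2 * N * \<Delta> = of_int d"
    by (auto elim: Ints_cases)
  have "(real k + 1) * 2 < (real k + 1) * (2 * N * \<Delta>)"
  proof -
    have "(real k + 1) * 2 < 2 * N"
      using assms(3) unfolding N_def by simp
    also have "\<dots> \<le> 2 * N * ((real k + 1) * \<Delta>)"
      using climb \<open>0 < N\<close> by (simp add: mult_le_cancel_left1)
    finally show ?thesis
      by (simp add: algebra_simps)
  qed
  then have "2 < 2 * N * \<Delta>"
    by (subst (asm) mult_less_cancel_left_pos) auto
  then have "2 < d"
    using d by simp
  then have "real k * 3 \<le> real k * (2 * N * \<Delta>)"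
    using d by (intro mult_left_mono) auto
  also have "\<dots> \<le> 2 * N"
    using stay \<open>0 < N\<close> by (simp add: mult_le_cancel_left1 algebra_simps)
  finally have "3 * real k \<le> 2 * real x + 2"
    unfolding N_def by simp
  moreover have "10 \<le> real x" and "real x \<le> real k + 2"
    using assms(2,4) by simp_all
  ultimately show False
    by linarith
qed

lemma two_bidders_impossible:
  assumes "n = 2" and "10 \<le> x"
  shows False
proof -
  have "\<beta> (x - 2) < \<beta> x"
  proof (rule ccontr)
    assume "\<not> \<beta> (x - 2) < \<beta> x"
    then have "\<beta> (x - 2) = \<beta> x"
      using bid_mono[of "x - 2" x] by simp
    then have "\<forall>v\<in>{x - 2, x - 1, x}. \<beta> v = \<beta> x"
      using bid_mono[of "x - 2" "x - 1"] bid_mono[of "x - 1" x] by auto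
    moreover have "card {x - 2, x - 1, x} = 3"
      using assms(2) by (simp add: card_insert_if) arith
    moreover have "{1} \<subseteq> opponents n 0"
      using assms(1) by (simp add: opponents_def)
    ultimately have "real x * 3 \<le> 2 * (real x + 1)"
      using top_pool_bound_half[of "{1}" "{x - 2, x - 1, x}"] assms(2) by simp
    then show False
      using assms(2) by simp
  qed
  show False
  proof (cases "\<beta> (x - 1) = \<beta> x")
    case True
    then show False
      using two_bidders_short_top_pool_impossible[of "x - 2"] \<open>\<beta> (x - 2) < \<beta> x\<close> assms
      by (simp add: Suc_diff_Suc numeral_2_eq_2)
  next
    case False
    then have "\<beta> (x - 1) < \<beta> x"
      using bid_mono[of "x - 1" x] by simp
    then show False
      using two_bidders_short_top_pool_impossible[of "x - 1"] assms by simp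
  qed
qed

end

theorem proposition4:
  fixes n x :: nat and ties :: bool
  assumes "n \<ge> 2" and "x \<ge> 10"
  shows "\<not> (\<exists>beta. symmetric_equilibrium ties n x beta)"
proof
  assume "\<exists>beta. symmetric_equilibrium ties n x beta"
  then obtain \<beta> where "symmetric_equilibrium ties n x \<beta>" ..
  then interpret symmetric_all_pay_equilibrium ties n x \<beta>
    using assms(1) by unfold_locales
  consider "n = 2" | "n = 3" | "4 \<le> n"
    using assms(1) by linarith
  then show False
    using two_bidders_impossible three_bidders_impossible many_bidders_impossible assms(2)
    by cases blast+
qed

end
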